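(* Let $\mathcal{X}$ be a Banach space, $\epsilon>0$, $P\in\mathcal{B}(\mathcal{X})$ a projection with $\|P\|_\infty=1$, and $[0,\epsilon]\ni t\mapsto P(t)\in\mathcal{B}(\mathcal{X})$, $[0,\epsilon]\ni t\mapsto C(t)\in\mathcal{B}(\mathcal{X})$ two maps such that, for some $v,w\ge0$ and all $t\in[0,\epsilon]$, $P(t)^2=P(t)$, $P(t)C(t)=C(t)P(t)=C(t)$, $\|P(t)-P\|_\infty\le tv$ and $\|C(t)-P(t)\|_\infty\le tw$. Then for all $n\in\mathbb{N}$ with $\frac1n\in[0,\epsilon]$, $$\Big\|C(\tfrac1n)^n-e^{n(C(\frac1n)-P(\frac1n))}P(\tfrac1n)\Big\|_\infty\le\frac n2e^{v+w}\Big\|\big(C(\tfrac1n)-P(\tfrac1n)\big)^2\Big\|_\infty\le\frac{w^2}{2n}e^{v+w}.$$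
   Context: $\mathcal{B}(\mathcal{X})$: bounded operators with operator norm $\|\cdot\|_\infty$; a projection is a bounded idempotent; exponentials of bounded operators are defined by power series. *)

theory Defs
  imports "HOL-Analysis.Analysis"
begin

definition blpow :: "('a::real_normed_vector \<Rightarrow>\<^sub>L 'a) \<Rightarrow> nat \<Rightarrow> ('a \<Rightarrow>\<^sub>L 'a)" where
  "blpow A n = ((\<lambda>B. A o\<^sub>L B) ^^ n) id_blinfun"

definition blexp :: "('a::banach \<Rightarrow>\<^sub>L 'a) \<Rightarrow> ('a \<Rightarrow>\<^sub>L 'a)" where
  "blexp A = (\<Sum>k. (1 / fact k) *\<^sub>R blpow A k)"

end

theory Submission
  imports Defs
begin

(* Write Q = P(1/n) and D = C(1/n) - Q. Since Q^2 = Q and QD = DQ = D, the binomial theorem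
   holds on the range of Q: C(1/n)^n = sum_k (n choose k) D^k Q, while e^{nD} Q = sum_k n^k/k! D^k Q.
   The terms k = 0, 1 coincide, and for k >= 2 the Weierstrass product inequality gives
   |(n choose k) - n^k/k!| <= n^(k-1) / (2 (k-2)!), so the difference is at most
   (n/2) ||D^2|| e^(n ||D||), with n ||D|| <= w. *)

interpretation blinfun_compose: bounded_bilinear "(o\<^sub>L)"
  by (rule bounded_bilinear_blinfun_compose)

lemma blinfun_compose_assoc: "(A o\<^sub>L B) o\<^sub>L C = A o\<^sub>L (B o\<^sub>L C)"
  by (rule blinfun_eqI) simp

lemma blinfun_compose_id_left [simp]: "id_blinfun o\<^sub>L A = A"
  by (rule blinfun_eqI) simp

lemma blinfun_compose_id_right [simp]: "A o\<^sub>L id_blinfun = A"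
  by (rule blinfun_eqI) simp

lemma blpow_0 [simp]: "blpow A 0 = id_blinfun"
  by (simp add: blpow_def)

lemma blpow_Suc: "blpow A (Suc n) = A o\<^sub>L blpow A n"
  by (simp add: blpow_def)

lemma blpow_add: "blpow A (m + n) = blpow A m o\<^sub>L blpow A n"
  by (induction m) (simp_all add: blpow_Suc blinfun_compose_assoc)

lemma blpow_Suc_right: "blpow A (Suc n) = blpow A n o\<^sub>L A"
  using blpow_add[of A n 1] by (simp add: blpow_Suc)

lemma blpow_scaleR: "blpow (r *\<^sub>R A) n = r ^ n *\<^sub>R blpow A n"
  by (induction n) (simp_all add: blpow_Suc blinfun_compose.scaleR_left blinfun_compose.scaleR_right)

lemma norm_blpow_le: "norm (blpow A n) \<le> norm A ^ n"
proof (induction n)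
  case 0
  show ?case using norm_blinfun_id_le by simp
next
  case (Suc n)
  have "norm (blpow A (Suc n)) \<le> norm A * norm (blpow A n)"
    by (simp add: blpow_Suc norm_blinfun_compose)
  also have "\<dots> \<le> norm A * norm A ^ n"
    using Suc by (simp add: mult_left_mono)
  finally show ?case by simp
qed

lemma sums_blexp: "(\<lambda>k. (1 / fact k) *\<^sub>R blpow A k) sums blexp A"
proof -
  have "summable (\<lambda>k. (1 / fact k) *\<^sub>R blpow A k)"
  proof (rule summable_comparison_test)
    show "summable (\<lambda>k. norm A ^ k /\<^sub>R fact k)"
      using exp_converges by (rule sums_summable)
    show "\<exists>N. \<forall>k\<ge>N. norm ((1 / fact k) *\<^sub>R blpow A k) \<le> norm A ^ k /\<^sub>R fact k"
      using norm_blpow_le by (auto intro!: divide_right_mono simp: divide_inverse_commute)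
  qed
  then show ?thesis
    unfolding blexp_def by (rule summable_sums)
qed

lemma sum_choose_Suc_scaleR:
  fixes x :: "nat \<Rightarrow> 'b::real_vector"
  shows "(\<Sum>k\<le>n. real (n choose k) *\<^sub>R (x k + x (Suc k)))
    = (\<Sum>k\<le>Suc n. real (Suc n choose k) *\<^sub>R x k)"
proof -
  have "(\<Sum>k\<le>Suc n. real (Suc n choose k) *\<^sub>R x k)
      = x 0 + (\<Sum>k\<le>n. real (n choose k) *\<^sub>R x (Suc k))
          + (\<Sum>k\<le>n. real (n choose Suc k) *\<^sub>R x (Suc k))"
    by (simp add: sum.atMost_Suc_shift sum.distrib scaleR_add_left del: sum.atMost_Suc)
  moreover have "(\<Sum>k\<le>n. real (n choose k) *\<^sub>R x k)
      = x 0 + (\<Sum>k\<le>n. real (n choose Suc k) *\<^sub>R x (Suc k))"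
    using sum.atMost_Suc_shift[of "\<lambda>k. real (n choose k) *\<^sub>R x k" n] by (simp add: binomial_eq_0)
  ultimately show ?thesis
    by (simp add: sum.distrib scaleR_add_right)
qed

lemma blpow_projection_add_binomial:
  assumes QQ: "Q o\<^sub>L Q = Q" and QD: "Q o\<^sub>L D = D" and DQ: "D o\<^sub>L Q = D"
  shows "blpow (Q + D) n o\<^sub>L Q = (\<Sum>k\<le>n. real (n choose k) *\<^sub>R (blpow D k o\<^sub>L Q))"
proof (induction n)
  case 0
  show ?case by simp
next
  case (Suc n)
  have Q_fixes: "Q o\<^sub>L (blpow D k o\<^sub>L Q) = blpow D k o\<^sub>L Q" for k
    by (cases k) (simp_all add: QQ blpow_Suc QD flip: blinfun_compose_assoc)
  have step: "(Q + D) o\<^sub>L (blpow D k o\<^sub>L Q)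
      = (blpow D k o\<^sub>L Q) + (blpow D (Suc k) o\<^sub>L Q)" for k
    by (simp add: blinfun_compose.add_left Q_fixes blpow_Suc blinfun_compose_assoc)
  have "blpow (Q + D) (Suc n) o\<^sub>L Q = (Q + D) o\<^sub>L (blpow (Q + D) n o\<^sub>L Q)"
    by (simp add: blpow_Suc blinfun_compose_assoc)
  also have "\<dots>
      = (\<Sum>k\<le>n. real (n choose k) *\<^sub>R ((blpow D k o\<^sub>L Q) + (blpow D (Suc k) o\<^sub>L Q)))"
    by (simp add: Suc blinfun_compose.sum_right blinfun_compose.scaleR_right step)
  also have "\<dots> = (\<Sum>k\<le>Suc n. real (Suc n choose k) *\<^sub>R (blpow D k o\<^sub>L Q))"
    by (rule sum_choose_Suc_scaleR)
  finally show ?case .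
qed

lemma blpow_projection_add_sums:
  assumes QQ: "Q o\<^sub>L Q = Q" and QD: "Q o\<^sub>L D = D" and DQ: "D o\<^sub>L Q = D" and "n \<ge> 1"
  shows "(\<lambda>k. real (n choose k) *\<^sub>R (blpow D k o\<^sub>L Q)) sums blpow (Q + D) n"
proof -
  obtain m where m: "n = Suc m"
    using \<open>n \<ge> 1\<close> by (cases n) auto
  have "(Q + D) o\<^sub>L Q = Q + D"
    by (simp add: blinfun_compose.add_left QQ DQ)
  then have "blpow (Q + D) n o\<^sub>L Q = blpow (Q + D) n"
    unfolding m by (simp only: blpow_Suc_right blinfun_compose_assoc)
  then have "blpow (Q + D) n = (\<Sum>k\<le>n. real (n choose k) *\<^sub>R (blpow D k o\<^sub>L Q))"
    using blpow_projection_add_binomial[OF QQ QD DQ] by simp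
  moreover have "(\<lambda>k. real (n choose k) *\<^sub>R (blpow D k o\<^sub>L Q)) sums
      (\<Sum>k\<le>n. real (n choose k) *\<^sub>R (blpow D k o\<^sub>L Q))"
    by (rule sums_finite) (simp_all add: binomial_eq_0)
  ultimately show ?thesis
    by simp
qed

lemma sums_blexp_scaleR_compose:
  "(\<lambda>k. (r ^ k / fact k) *\<^sub>R (blpow D k o\<^sub>L Q)) sums (blexp (r *\<^sub>R D) o\<^sub>L Q)"
proof -
  have "(\<lambda>k. ((1 / fact k) *\<^sub>R blpow (r *\<^sub>R D) k) o\<^sub>L Q) sums (blexp (r *\<^sub>R D) o\<^sub>L Q)"
    using sums_blexp by (rule blinfun_compose.bounded_linear_left[THEN bounded_linear.sums])
  then show ?thesis
    by (simp add: blpow_scaleR blinfun_compose.scaleR_left)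
qed

lemma sum_lessThan_real_of_nat: "(\<Sum>i<k. real i) = real k * (real k - 1) / 2"
  by (induction k) (simp_all add: field_simps)

lemma abs_prod_falling_minus_power_le:
  assumes "n > 0"
  shows "\<bar>(\<Prod>i<k. real n - real i) - real n ^ k\<bar>
    \<le> real n ^ k * (real k * (real k - 1) / (2 * real n))"
proof (cases "k \<le> n")
  case True
  define r where "r = (\<Prod>i<k. 1 - real i / real n)"
  have unit: "real i / real n \<in> {0..1}" if "i < k" for i
    using that True by auto
  have "(\<Prod>i<k. real n - real i) = (\<Prod>i<k. real n * (1 - real i / real n))"
    using assms by (intro prod.cong) (auto simp: field_simps)
  then have factor: "(\<Prod>i<k. real n - real i) = real n ^ k * r"
    by (simp add: prod.distrib r_def)
  have "1 - real k * (real k - 1) / (2 * real n) = 1 - (\<Sum>i<k. real i / real n)"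
    by (simp add: sum_divide_distrib[symmetric] sum_lessThan_real_of_nat)
  also have "\<dots> \<le> r"
    unfolding r_def using unit by (intro Weierstrass_prod_ineq) auto
  finally have deficit: "1 - r \<le> real k * (real k - 1) / (2 * real n)"
    by simp
  have "r \<le> 1"
    unfolding r_def using unit by (intro prod_le_1) auto
  then have "real n ^ k * r \<le> real n ^ k"
    by (simp add: mult_left_le)
  then have "\<bar>real n ^ k * r - real n ^ k\<bar> = real n ^ k * (1 - r)"
    by (simp add: right_diff_distrib)
  also have "\<dots> \<le> real n ^ k * (real k * (real k - 1) / (2 * real n))"
    using deficit by (intro mult_left_mono) auto
  finally show ?thesis
    unfolding factor .
next
  case False
  have zero: "(\<Prod>i<k. real n - real i) = 0"
    using False by (intro prod_zero bexI[of _ n]) auto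
  have "2 * real n \<le> (real n + 1) * real n"
    using assms by simp
  also have "\<dots> \<le> real k * (real k - 1)"
    using False by (intro mult_mono) auto
  finally have "1 \<le> real k * (real k - 1) / (2 * real n)"
    using assms by (simp add: field_simps)
  then have "real n ^ k * 1 \<le> real n ^ k * (real k * (real k - 1) / (2 * real n))"
    by (intro mult_left_mono) auto
  then show ?thesis
    unfolding zero by simp
qed

lemma abs_binomial_minus_power_div_fact_le:
  assumes "n > 0"
  shows "\<bar>real (n choose (k + 2)) - real n ^ (k + 2) / fact (k + 2)\<bar>
    \<le> real n ^ (k + 1) / (2 * fact k)"
proof -
  define p where "p = (\<Prod>i<k + 2. real n - real i)"
  have choose: "real (n choose (k + 2)) = p / fact (k + 2)"
    by (simp add: binomial_gbinomial gbinomial_prod_rev p_def atLeast0LessThan)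
  have fact: "(fact (k + 2) :: real) = fact k * ((real k + 2) * (real k + 1))"
    by (simp add: fact_Suc algebra_simps)
  have cancel: "x * c / 2 / (f * c) = x / (2 * f)" if "c \<noteq> 0" for x c f :: real
    using that by simp
  have "\<bar>p - real n ^ (k + 2)\<bar>
      \<le> real n ^ (k + 2) * (real (k + 2) * (real (k + 2) - 1) / (2 * real n))"
    unfolding p_def by (rule abs_prod_falling_minus_power_le[OF assms])
  also have "\<dots> = real n ^ (k + 1) * ((real k + 2) * (real k + 1)) / 2"
    using assms by (simp add: field_simps)
  finally have deviation:
    "\<bar>p - real n ^ (k + 2)\<bar> \<le> real n ^ (k + 1) * ((real k + 2) * (real k + 1)) / 2" .
  have "\<bar>real (n choose (k + 2)) - real n ^ (k + 2) / fact (k + 2)\<bar>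
      = \<bar>p - real n ^ (k + 2)\<bar> / fact (k + 2)"
    unfolding choose diff_divide_distrib[symmetric] by simp
  also have "\<dots> \<le> real n ^ (k + 1) * ((real k + 2) * (real k + 1)) / 2 / fact (k + 2)"
    using deviation by (intro divide_right_mono) auto
  also have "\<dots> = real n ^ (k + 1) / (2 * fact k)"
    unfolding fact by (rule cancel) simp
  finally show ?thesis .
qed

lemma norm_blpow_minus_blexp_compose_le:
  assumes QQ: "Q o\<^sub>L Q = Q" and QC: "Q o\<^sub>L C = C" and CQ: "C o\<^sub>L Q = C" and "n \<ge> 1"
  shows "norm (blpow C n - (blexp (real n *\<^sub>R (C - Q)) o\<^sub>L Q))
    \<le> real n / 2 * exp (real n * norm (C - Q)) * norm (blpow (C - Q) 2)"
proof -
  define D where "D = C - Q"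
  have QD: "Q o\<^sub>L D = D" and DQ: "D o\<^sub>L Q = D"
    using QQ QC CQ by (simp_all add: D_def blinfun_compose.diff_left blinfun_compose.diff_right)
  have Q_plus_D: "Q + D = C"
    by (simp add: D_def)
  define c where "c k = real (n choose k) - real n ^ k / fact k" for k
  define g where "g k = c k *\<^sub>R (blpow D k o\<^sub>L Q)" for k
  define h where "h m = real n / 2 * norm (blpow D 2) * ((real n * norm D) ^ m / fact m)" for m
  have "g sums (blpow (Q + D) n - (blexp (real n *\<^sub>R D) o\<^sub>L Q))"
    using sums_diff[OF blpow_projection_add_sums[OF QQ QD DQ \<open>n \<ge> 1\<close>]
        sums_blexp_scaleR_compose[of "real n" D Q]]
    unfolding g_def c_def scaleR_diff_left .
  moreover have "g i = 0" if "i < 2" for i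
    using that by (cases i) (auto simp: g_def c_def)
  ultimately have g_tail:
    "(\<lambda>m. g (m + 2)) sums (blpow (Q + D) n - (blexp (real n *\<^sub>R D) o\<^sub>L Q))"
    using sums_zero_iff_shift[of 2 g] by blast
  have "(\<lambda>m. (real n * norm D) ^ m / fact m) sums exp (real n * norm D)"
    using exp_converges[of "real n * norm D"] by (simp add: divide_inverse_commute)
  then have h_sums: "h sums (real n / 2 * norm (blpow D 2) * exp (real n * norm D))"
    unfolding h_def by (rule sums_mult)
  have g_tail_bound: "norm (g (m + 2)) \<le> h m" for m
  proof -
    have "blpow D (m + 2) o\<^sub>L Q = blpow D m o\<^sub>L blpow D 2"
      by (simp add: blpow_add[symmetric] blpow_Suc_right blinfun_compose_assoc DQ)
    then have term_bound: "norm (blpow D (m + 2) o\<^sub>L Q) \<le> norm D ^ m * norm (blpow D 2)"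
      using norm_blinfun_compose[of "blpow D m" "blpow D 2"] norm_blpow_le[of D m]
      by (simp add: mult_right_mono order_trans)
    have coeff_bound: "\<bar>c (m + 2)\<bar> \<le> real n ^ (m + 1) / (2 * fact m)"
      unfolding c_def using \<open>n \<ge> 1\<close> by (intro abs_binomial_minus_power_div_fact_le) simp
    have "norm (g (m + 2)) \<le> real n ^ (m + 1) / (2 * fact m) * (norm D ^ m * norm (blpow D 2))"
      unfolding g_def norm_scaleR by (rule mult_mono[OF coeff_bound term_bound]) simp_all
    also have "\<dots> = h m"
      by (simp add: h_def power_mult_distrib)
    finally show ?thesis .
  qed
  have "norm (blpow (Q + D) n - (blexp (real n *\<^sub>R D) o\<^sub>L Q))
      \<le> real n / 2 * norm (blpow D 2) * exp (real n * norm D)"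
    by (rule norm_sums_le[OF g_tail h_sums g_tail_bound])
  then show ?thesis
    unfolding Q_plus_D D_def[symmetric] by (simp add: mult_ac)
qed

theorem lemmaC1:
  fixes \<epsilon> v w :: real
    and P :: "'a::banach \<Rightarrow>\<^sub>L 'a"
    and Pt Ct :: "real \<Rightarrow> ('a \<Rightarrow>\<^sub>L 'a)"
  assumes eps_pos: "\<epsilon> > 0"
    and P_proj: "P o\<^sub>L P = P"
    and P_norm: "norm P = 1"
    and v_nonneg: "v \<ge> 0" and w_nonneg: "w \<ge> 0"
    and Pt_proj: "\<And>t. t \<in> {0..\<epsilon>} \<Longrightarrow> Pt t o\<^sub>L Pt t = Pt t"
    and PC: "\<And>t. t \<in> {0..\<epsilon>} \<Longrightarrow> Pt t o\<^sub>L Ct t = Ct t"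
    and CP: "\<And>t. t \<in> {0..\<epsilon>} \<Longrightarrow> Ct t o\<^sub>L Pt t = Ct t"
    and Pt_close: "\<And>t. t \<in> {0..\<epsilon>} \<Longrightarrow> norm (Pt t - P) \<le> t * v"
    and Ct_close: "\<And>t. t \<in> {0..\<epsilon>} \<Longrightarrow> norm (Ct t - Pt t) \<le> t * w"
  shows "\<forall>n::nat. n \<ge> 1 \<and> 1 / real n \<in> {0..\<epsilon>} \<longrightarrow>
      norm (blpow (Ct (1 / real n)) n
            - (blexp (real n *\<^sub>R (Ct (1 / real n) - Pt (1 / real n))) o\<^sub>L Pt (1 / real n)))
        \<le> real n / 2 * exp (v + w)
            * norm (blpow (Ct (1 / real n) - Pt (1 / real n)) 2)
      \<and> real n / 2 * exp (v + w) * norm (blpow (Ct (1 / real n) - Pt (1 / real n)) 2)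
        \<le> w\<^sup>2 / (2 * real n) * exp (v + w)"
proof (intro allI impI)
  fix n :: nat
  assume "n \<ge> 1 \<and> 1 / real n \<in> {0..\<epsilon>}"
  then have n: "n \<ge> 1" and t: "1 / real n \<in> {0..\<epsilon>}"
    by auto
  let ?Q = "Pt (1 / real n)" and ?C = "Ct (1 / real n)"
  have close: "norm (?C - ?Q) \<le> w / real n"
    using Ct_close[OF t] by simp
  have "exp (real n * norm (?C - ?Q)) \<le> exp (v + w)"
    using close n v_nonneg by (simp add: field_simps)
  then have "real n / 2 * exp (real n * norm (?C - ?Q)) * norm (blpow (?C - ?Q) 2)
      \<le> real n / 2 * exp (v + w) * norm (blpow (?C - ?Q) 2)"
    by (intro mult_right_mono mult_left_mono) auto
  with norm_blpow_minus_blexp_compose_le[OF Pt_proj[OF t] PC[OF t] CP[OF t] n]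
  have first: "norm (blpow ?C n - (blexp (real n *\<^sub>R (?C - ?Q)) o\<^sub>L ?Q))
      \<le> real n / 2 * exp (v + w) * norm (blpow (?C - ?Q) 2)"
    by (rule order_trans)
  have "norm (blpow (?C - ?Q) 2) \<le> (w / real n) ^ 2"
    using norm_blpow_le[of "?C - ?Q" 2] power_mono[OF close norm_ge_zero, of 2] by linarith
  then have "real n / 2 * exp (v + w) * norm (blpow (?C - ?Q) 2)
      \<le> real n / 2 * exp (v + w) * (w / real n) ^ 2"
    by (intro mult_left_mono) auto
  also have "\<dots> = w\<^sup>2 / (2 * real n) * exp (v + w)"
    using n by (simp add: power2_eq_square)
  finally show "norm (blpow ?C n - (blexp (real n *\<^sub>R (?C - ?Q)) o\<^sub>L ?Q))
      \<le> real n / 2 * exp (v + w) * norm (blpow (?C - ?Q) 2)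
    \<and> real n / 2 * exp (v + w) * norm (blpow (?C - ?Q) 2) \<le> w\<^sup>2 / (2 * real n) * exp (v + w)"
    using first by simp
qed

end
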